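(* Let $G$ be a looped simple graph, let $B$ be a transversal of $W(G)$ that is a basis of $M[IAS(G)]$, and let $C$ be a transversal with $B\cap C=\emptyset$. For $v\in V(G)$ let $B(v)$ and $C(v)$ denote the elements of $\tau_G(v)$ lying in $B$ and in $C$, respectively. Let $H$ be a looped simple graph with $V(H)=V(G)$ in which two distinct vertices $v,w$ are adjacent if and only if $B(w)$ belongs to the fundamental circuit of $C(v)$ with respect to $B$ in $M[IAS(G)]$. Then $H$ is well defined (this relation is symmetric in $v,w$), $H$ is locally equivalent to $G$, and there is an induced isomorphism $\beta:M[IAS(G)]\to M[IAS(H)]$ with $\beta(B)=\Phi(H)=\{\phi_H(v):v\in V(H)\}$.
   Context: A looped simple graph is a finite graph in which each vertex carries at most one loop and no two distinct vertices are joined by more than one edge. "Adjacent"/"neighbors" refer only to distinct vertices joined by a non-loop edge; $N_G(v)$ is the set of neighbors of $v$. $A(G)$ is the $V(G)\times V(G)$ matrix over $GF(2)$ with diagonal entry $1$ exactly at looped vertices and off-diagonal entry $1$ exactly for adjacent pairs. $IAS(G)=(I\mid A(G)\mid A(G)+I)$ over $GF(2)$, rows indexed by $V(G)$; the $v$-columns of the three blocks are labelled $\phi_G(v),\chi_G(v),\psi_G(v)$. $M[IAS(G)]$ is the binary column matroid of $IAS(G)$ on $W(G)=\{\phi_G(v),\chi_G(v),\psi_G(v):v\in V(G)\}$. The vertex triple of $v$ is $\tau_G(v)=\{\phi_G(v),\chi_G(v),\psi_G(v)\}$; a transversal meets each vertex triple in exactly one element. For a basis $B$ and element $e\notin B$,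 the fundamental circuit of $e$ with respect to $B$ is the unique circuit contained in $B\cup\{e\}$. Local equivalence: $G_\ell^v$ complements the loop status of $v$; $G_s^v$ complements the adjacency status of every pair of distinct neighbors of $v$; $G_{ns}^v$ does this and also complements the loop status of every neighbor of $v$. $H$ is locally equivalent to $G$ if obtained from $G$ by a finite sequence of such operations. Induced isomorphisms: for each such operation producing $G'$ from $G$ there is a matroid isomorphism $M[IAS(G)]\to M[IAS(G')]$ sending $\alpha_G(x)\mapsto\alpha_{G'}(x)$ for all $\alpha\in\{\phi,\chi,\psi\}$, $x\in V(G)$, except: for $G'=G_\ell^v$, $\chi_G(v)\mapsto\psi_{G'}(v)$, $\psi_G(v)\mapsto\chi_{G'}(v)$; for $G'=G_{ns}^v$ with $v$ unlooped, $\phi_G(v)\mapsto\psi_{G'}(v)$, $\psi_G(v)\mapsto\phi_{G'}(v)$, and with $v$ looped, $\phi_G(v)\mapsto\chi_{G'}(v)$, $\chi_G(v)\mapsto\phi_{G'}(v)$; for $G'=G_s^v$, the same exchange at $v$ as for $G_{ns}^v$ and in addition, for every $w\in N_G(v)$, $\chi_G(w)\mapsto\psi_{G'}(w)$, $\psi_G(w)\mapsto\chi_{G'}(w)$. An induced isomorphism $M[IAS(G)]\to M[IAS(H)]$ is a composition of such isomorphisms along a sequence of operations transforming $G$ into $H$. *)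

theory Defs
  imports Main "HOL-Library.Z2"
begin

text \<open>A looped simple graph on a finite vertex set V is encoded by its GF(2) adjacency
  matrix, viewed as a symmetric relation E on V: E v v holds iff v is looped, and for
  v \<noteq> w, E v w holds iff v and w are adjacent.\<close>

definition looped_simple_graph :: "'a set \<Rightarrow> ('a \<Rightarrow> 'a \<Rightarrow> bool) \<Rightarrow> bool" where
  "looped_simple_graph V E \<longleftrightarrow> finite V \<and> (\<forall>x y. E x y \<longrightarrow> x \<in> V \<and> y \<in> V)
      \<and> (\<forall>x y. E x y = E y x)"

definition nbhd :: "('a \<Rightarrow> 'a \<Rightarrow> bool) \<Rightarrow> 'a \<Rightarrow> 'a set" where
  "nbhd E v = {w. w \<noteq> v \<and> E v w}"

datatype kind = Phi | Chi | Psi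

text \<open>Elements of W(G): (Phi,v) = phi_G(v), (Chi,v) = chi_G(v), (Psi,v) = psi_G(v).\<close>
type_synonym 'a elt = "kind \<times> 'a"

definition W :: "'a set \<Rightarrow> 'a elt set" where
  "W V = UNIV \<times> V"

definition vtriple :: "'a \<Rightarrow> 'a elt set" where
  "vtriple v = {(Phi, v), (Chi, v), (Psi, v)}"

definition Phis :: "'a set \<Rightarrow> 'a elt set" where
  "Phis V = {(Phi, v) | v. v \<in> V}"

text \<open>Columns of IAS(G) = (I | A(G) | A(G)+I) over GF(2); the entry in row w.\<close>
fun col :: "('a \<Rightarrow> 'a \<Rightarrow> bool) \<Rightarrow> 'a elt \<Rightarrow> 'a \<Rightarrow> bit" where
  "col E (Phi, v) w = of_bool (w = v)"
| "col E (Chi, v) w = of_bool (E w v)"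
| "col E (Psi, v) w = of_bool (E w v) + of_bool (w = v)"

definition indep :: "'a set \<Rightarrow> ('a \<Rightarrow> 'a \<Rightarrow> bool) \<Rightarrow> 'a elt set \<Rightarrow> bool" where
  "indep V E S \<longleftrightarrow> S \<subseteq> W V \<and>
     (\<forall>c :: 'a elt \<Rightarrow> bit. (\<forall>w\<in>V. (\<Sum>t\<in>S. c t * col E t w) = 0) \<longrightarrow> (\<forall>t\<in>S. c t = 0))"

definition is_basis :: "'a set \<Rightarrow> ('a \<Rightarrow> 'a \<Rightarrow> bool) \<Rightarrow> 'a elt set \<Rightarrow> bool" where
  "is_basis V E B \<longleftrightarrow> indep V E B \<and> (\<forall>S. B \<subset> S \<and> S \<subseteq> W V \<longrightarrow> \<not> indep V E S)"

definition circuit :: "'a set \<Rightarrow> ('a \<Rightarrow> 'a \<Rightarrow> bool) \<Rightarrow> 'a elt set \<Rightarrow> bool" where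
  "circuit V E C \<longleftrightarrow> C \<subseteq> W V \<and> \<not> indep V E C \<and> (\<forall>D. D \<subset> C \<longrightarrow> indep V E D)"

definition fund_circuit :: "'a set \<Rightarrow> ('a \<Rightarrow> 'a \<Rightarrow> bool) \<Rightarrow> 'a elt set \<Rightarrow> 'a elt \<Rightarrow> 'a elt set" where
  "fund_circuit V E B e = (THE C. circuit V E C \<and> C \<subseteq> insert e B)"

definition transversal :: "'a set \<Rightarrow> 'a elt set \<Rightarrow> bool" where
  "transversal V T \<longleftrightarrow> T \<subseteq> W V \<and> (\<forall>v\<in>V. card (T \<inter> vtriple v) = 1)"

definition pick :: "'a elt set \<Rightarrow> 'a \<Rightarrow> 'a elt" where
  "pick T v = (THE x. x \<in> T \<inter> vtriple v)"

definition loc_l :: "'a \<Rightarrow> ('a \<Rightarrow> 'a \<Rightarrow> bool) \<Rightarrow> ('a \<Rightarrow> 'a \<Rightarrow> bool)" where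
  "loc_l v E = (\<lambda>x y. if x = v \<and> y = v then \<not> E x y else E x y)"

definition loc_s :: "'a \<Rightarrow> ('a \<Rightarrow> 'a \<Rightarrow> bool) \<Rightarrow> ('a \<Rightarrow> 'a \<Rightarrow> bool)" where
  "loc_s v E = (\<lambda>x y. if x \<noteq> y \<and> x \<in> nbhd E v \<and> y \<in> nbhd E v then \<not> E x y else E x y)"

definition loc_ns :: "'a \<Rightarrow> ('a \<Rightarrow> 'a \<Rightarrow> bool) \<Rightarrow> ('a \<Rightarrow> 'a \<Rightarrow> bool)" where
  "loc_ns v E = (\<lambda>x y. if x \<in> nbhd E v \<and> y \<in> nbhd E v then \<not> E x y else E x y)"

definition swap_at :: "'a \<Rightarrow> kind \<Rightarrow> kind \<Rightarrow> 'a elt \<Rightarrow> 'a elt" where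
  "swap_at v a b e = (if snd e = v \<and> fst e = a then (b, v)
                      else if snd e = v \<and> fst e = b then (a, v) else e)"

text \<open>The maps on labels underlying the induced isomorphisms of the three operations
  (applied to the graph E before the operation).\<close>
definition map_l :: "'a \<Rightarrow> ('a \<Rightarrow> 'a \<Rightarrow> bool) \<Rightarrow> 'a elt \<Rightarrow> 'a elt" where
  "map_l v E = swap_at v Chi Psi"

definition map_ns :: "'a \<Rightarrow> ('a \<Rightarrow> 'a \<Rightarrow> bool) \<Rightarrow> 'a elt \<Rightarrow> 'a elt" where
  "map_ns v E = (if E v v then swap_at v Phi Chi else swap_at v Phi Psi)"

definition map_s :: "'a \<Rightarrow> ('a \<Rightarrow> 'a \<Rightarrow> bool) \<Rightarrow> 'a elt \<Rightarrow> 'a elt" where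
  "map_s v E = (\<lambda>e. if snd e \<in> nbhd E v then swap_at (snd e) Chi Psi e else map_ns v E e)"

inductive induced_iso :: "'a set \<Rightarrow> ('a \<Rightarrow> 'a \<Rightarrow> bool) \<Rightarrow> ('a \<Rightarrow> 'a \<Rightarrow> bool)
    \<Rightarrow> ('a elt \<Rightarrow> 'a elt) \<Rightarrow> bool" for V G where
  refl: "induced_iso V G G id"
| step_l: "induced_iso V G E f \<Longrightarrow> v \<in> V \<Longrightarrow> induced_iso V G (loc_l v E) (map_l v E \<circ> f)"
| step_s: "induced_iso V G E f \<Longrightarrow> v \<in> V \<Longrightarrow> induced_iso V G (loc_s v E) (map_s v E \<circ> f)"
| step_ns: "induced_iso V G E f \<Longrightarrow> v \<in> V \<Longrightarrow> induced_iso V G (loc_ns v E) (map_ns v E \<circ> f)"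

inductive locally_equivalent :: "'a set \<Rightarrow> ('a \<Rightarrow> 'a \<Rightarrow> bool) \<Rightarrow> ('a \<Rightarrow> 'a \<Rightarrow> bool) \<Rightarrow> bool"
  for V G where
  refl: "locally_equivalent V G G"
| step_l: "locally_equivalent V G E \<Longrightarrow> v \<in> V \<Longrightarrow> locally_equivalent V G (loc_l v E)"
| step_s: "locally_equivalent V G E \<Longrightarrow> v \<in> V \<Longrightarrow> locally_equivalent V G (loc_s v E)"
| step_ns: "locally_equivalent V G E \<Longrightarrow> v \<in> V \<Longrightarrow> locally_equivalent V G (loc_ns v E)"

end

(*
  Every local operation at v acts on the columns of IAS as the row operation adding row v
  to the rows of the neighbours of v, so induced isomorphisms preserve independence and
  circuits. Applying loc_ns at suitable vertices moves the basis transversal B onto the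
  phi-elements. Relative to that basis, the fundamental circuit of a non-phi element at v
  consists of the element and the phi-elements in the support of its column, i.e. at the
  neighbours of v in the new graph E. Hence B(w) lies in the fundamental circuit of C(v)
  iff v and w are adjacent in E, so H agrees with E off the diagonal, and the loop
  complementations turning E into H fix all phi-elements.
*)

theory Submission
  imports Defs
begin

(* Keep + and * on bit as ring operations, so that algebra_simps and sum lemmas apply. *)
declare add_bit_eq_xor[simp del] mult_bit_eq_and[simp del]

lemma of_bool_add_of_bool: "(of_bool P :: bit) + of_bool Q = of_bool (P \<noteq> Q)"
  by (cases P; cases Q) simp_all

lemma looped_simple_graph_sym: "looped_simple_graph V E \<Longrightarrow> E x y = E y x"
  unfolding looped_simple_graph_def by blast

lemma looped_simple_graph_dom: "looped_simple_graph V E \<Longrightarrow> E x y \<Longrightarrow> x \<in> V \<and> y \<in> V"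
  unfolding looped_simple_graph_def by blast

lemma subset_W_iff: "S \<subseteq> W V \<longleftrightarrow> (\<forall>e\<in>S. snd e \<in> V)"
  unfolding W_def by auto

lemma finite_W: "finite V \<Longrightarrow> finite (W V)"
proof -
  have "(UNIV :: kind set) = {Phi, Chi, Psi}" using kind.exhaust by auto
  then have "finite (UNIV :: kind set)" by (metis finite.emptyI finite.insertI)
  then show "finite V \<Longrightarrow> finite (W V)" by (simp add: W_def)
qed

lemma Phis_eq_image: "Phis V = (\<lambda>u. (Phi, u)) ` V"
  unfolding Phis_def by auto

section \<open>Local operations as row operations\<close>

definition local_step :: "'a set \<Rightarrow> ('a \<Rightarrow> 'a \<Rightarrow> bool) \<Rightarrow> ('a \<Rightarrow> 'a \<Rightarrow> bool)
    \<Rightarrow> ('a elt \<Rightarrow> 'a elt) \<Rightarrow> bool" where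
  "local_step V E E' m \<longleftrightarrow> (\<exists>v\<in>V. (E', m) = (loc_l v E, map_l v E)
      \<or> (E', m) = (loc_s v E, map_s v E) \<or> (E', m) = (loc_ns v E, map_ns v E))"

lemma induced_iso_local_step_induct [consumes 1, case_names refl step]:
  assumes "induced_iso V G E f" and "P G id"
    and "\<And>E f E' m. induced_iso V G E f \<Longrightarrow> P E f \<Longrightarrow> local_step V E E' m \<Longrightarrow> P E' (m \<circ> f)"
  shows "P E f"
  using assms(1)
proof induction
  case refl
  show ?case using assms(2) by (simp add: id_def)
next
  case (step_l E f v)
  then show ?case by (intro assms(3)) (auto simp: local_step_def)
next
  case (step_s E f v)
  then show ?case by (intro assms(3)) (auto simp: local_step_def)
next
  case (step_ns E f v)
  then show ?case by (intro assms(3)) (auto simp: local_step_def)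
qed

lemma induced_iso_local_step:
  "induced_iso V G E f \<Longrightarrow> local_step V E E' m \<Longrightarrow> induced_iso V G E' (m \<circ> f)"
  unfolding local_step_def by (auto intro: induced_iso.intros)

lemma locally_equivalent_local_step:
  "locally_equivalent V G E \<Longrightarrow> local_step V E E' m \<Longrightarrow> locally_equivalent V G E'"
  unfolding local_step_def by (auto intro: locally_equivalent.intros)

lemma snd_swap_at [simp]: "snd (swap_at v a b e) = snd e"
  unfolding swap_at_def by auto

lemma local_step_involution:
  assumes "local_step V E E' m"
  shows "m (m e) = e" and "snd (m e) = snd e"
  using assms unfolding local_step_def map_l_def map_s_def map_ns_def swap_at_def nbhd_def
  by (cases e; auto)+

lemma local_step_looped_simple_graph:
  "looped_simple_graph V E \<Longrightarrow> local_step V E E' m \<Longrightarrow> looped_simple_graph V E'"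
  unfolding local_step_def looped_simple_graph_def loc_l_def loc_s_def loc_ns_def nbhd_def
  by (elim conjE bexE disjE; simp; blast)

lemma col_loc_l: "col (loc_l v E) (map_l v E e) w = col E e w"
  by (cases e; cases "fst e"; cases "E v v"; cases "snd e = v"; cases "w = v")
     (auto simp: map_l_def swap_at_def loc_l_def of_bool_add_of_bool)

lemma col_loc_ns:
  assumes "looped_simple_graph V E"
  shows "col (loc_ns v E) (map_ns v E e) w = col E e w + col E e v * of_bool (w \<in> nbhd E v)"
  using looped_simple_graph_sym[OF assms]
  by (cases e; cases "fst e"; cases "E v v"; cases "snd e = v"; cases "w = v")
     (auto simp: map_ns_def swap_at_def loc_ns_def nbhd_def of_bool_add_of_bool)

lemma col_loc_s:
  assumes "looped_simple_graph V E"
  shows "col (loc_s v E) (map_s v E e) w = col E e w + col E e v * of_bool (w \<in> nbhd E v)"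
  using looped_simple_graph_sym[OF assms]
  by (cases e; cases "fst e"; cases "E v v"; cases "snd e = v"; cases "w = v")
     (auto simp: map_s_def map_ns_def swap_at_def loc_s_def nbhd_def of_bool_add_of_bool)

lemma local_step_col:
  assumes "looped_simple_graph V E" and "local_step V E E' m"
  obtains v a where "v \<in> V" "a v = 0" "\<And>e w. col E' (m e) w = col E e w + col E e v * a w"
proof -
  from assms(2) obtain v where v: "v \<in> V" and "(E', m) = (loc_l v E, map_l v E)
      \<or> (E', m) = (loc_s v E, map_s v E) \<or> (E', m) = (loc_ns v E, map_ns v E)"
    unfolding local_step_def by blast
  then consider "E' = loc_l v E" "m = map_l v E" | "E' = loc_s v E" "m = map_s v E"
    | "E' = loc_ns v E" "m = map_ns v E" by auto
  then show thesis
  proof cases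
    case 1 then show thesis using that[OF v, of "\<lambda>_. 0"] by (simp add: col_loc_l)
  next
    case 2 then show thesis
      using that[OF v, of "\<lambda>w. of_bool (w \<in> nbhd E v)"] col_loc_s[OF assms(1)]
      by (simp add: nbhd_def)
  next
    case 3 then show thesis
      using that[OF v, of "\<lambda>w. of_bool (w \<in> nbhd E v)"] col_loc_ns[OF assms(1)]
      by (simp add: nbhd_def)
  qed
qed

lemma indep_image_row_operation:
  assumes "indep V E S" and "inj m" and "\<And>e. snd (m e) = snd e"
    and "v \<in> V" and "a v = 0" and col: "\<And>e w. col E' (m e) w = col E e w + col E e v * a w"
  shows "indep V E' (m ` S)"
  unfolding indep_def
proof (intro conjI allI impI ballI)
  show "m ` S \<subseteq> W V" using assms(1,3) by (auto simp: indep_def subset_W_iff)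
  fix c :: "'a elt \<Rightarrow> bit" and t
  assume zero: "\<forall>w\<in>V. (\<Sum>t\<in>m ` S. c t * col E' t w) = 0" and t: "t \<in> m ` S"
  define r where "r w = (\<Sum>s\<in>S. c (m s) * col E s w)" for w
  have sum_eq: "(\<Sum>t\<in>m ` S. c t * col E' t w) = r w + a w * r v" for w
  proof -
    have "(\<Sum>t\<in>m ` S. c t * col E' t w) = (\<Sum>s\<in>S. c (m s) * col E s w + a w * (c (m s) * col E s v))"
      by (simp add: sum.reindex inj_on_subset[OF assms(2)] col algebra_simps)
    then show ?thesis by (simp add: r_def sum.distrib sum_distrib_left)
  qed
  have "r v = 0" using zero sum_eq[of v] assms(4,5) by simp
  then have "\<forall>w\<in>V. (\<Sum>s\<in>S. (c \<circ> m) s * col E s w) = 0"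
    using zero sum_eq by (simp add: r_def)
  then have "\<forall>s\<in>S. (c \<circ> m) s = 0" using assms(1) unfolding indep_def by blast
  then show "c t = 0" using t by auto
qed

text \<open>The row operation of a local step is self-inverse, so one direction suffices.\<close>

lemma local_step_indep_image:
  assumes "looped_simple_graph V E" and "local_step V E E' m"
  shows "indep V E' (m ` S) \<longleftrightarrow> indep V E S"
proof -
  obtain v a where v: "v \<in> V" "a v = 0"
    and col: "\<And>e w. col E' (m e) w = col E e w + col E e v * a w"
    by (rule local_step_col[OF assms]) blast
  note inv = local_step_involution[OF assms(2)]
  have "inj m" by (metis inv(1) injI)
  have col_back: "col E (m e) w = col E' e w + col E' e v * a w" for e w
    using col[of "m e" w] col[of "m e" v] v(2) by (simp add: inv(1) algebra_simps)
  have "m ` m ` S = S" by (simp add: image_comp inv(1))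
  then show ?thesis
    using indep_image_row_operation[OF _ \<open>inj m\<close> inv(2) v col]
      indep_image_row_operation[OF _ \<open>inj m\<close> inv(2) v col_back, of "m ` S"] by metis
qed

lemma induced_iso_looped_simple_graph:
  "induced_iso V G E f \<Longrightarrow> looped_simple_graph V G \<Longrightarrow> looped_simple_graph V E"
  by (induction rule: induced_iso_local_step_induct) (auto intro: local_step_looped_simple_graph)

lemma induced_iso_locally_equivalent:
  "induced_iso V G E f \<Longrightarrow> locally_equivalent V G E"
  by (induction rule: induced_iso_local_step_induct)
     (auto intro: locally_equivalent.refl locally_equivalent_local_step)

lemma induced_iso_snd: "induced_iso V G E f \<Longrightarrow> snd (f e) = snd e"
  by (induction rule: induced_iso_local_step_induct) (auto simp: local_step_involution(2))

lemma induced_iso_bij: "induced_iso V G E f \<Longrightarrow> bij f"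
proof (induction rule: induced_iso_local_step_induct)
  case (step E f E' m)
  then have "bij m" by (metis local_step_involution(1) o_bij comp_apply id_apply ext)
  then show ?case using step.IH bij_comp by blast
qed (metis bij_id id_def)

lemma induced_iso_indep_image:
  assumes "induced_iso V G E f" and "looped_simple_graph V G"
  shows "indep V E (f ` S) \<longleftrightarrow> indep V G S"
  using assms(1)
proof (induction rule: induced_iso_local_step_induct)
  case (step E f E' m)
  have "looped_simple_graph V E" by (rule induced_iso_looped_simple_graph[OF step.hyps(1) assms(2)])
  then show ?case
    using local_step_indep_image[OF _ step.hyps(2), of "f ` S"] step.IH by (simp add: image_comp)
qed simp

lemma induced_iso_trans:
  "induced_iso V E E' g \<Longrightarrow> induced_iso V G E f \<Longrightarrow> induced_iso V G E' (g \<circ> f)"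
  by (induction rule: induced_iso_local_step_induct)
     (simp_all, metis comp_assoc induced_iso_local_step)

section \<open>Circuits relative to the phi-elements\<close>

lemma circuit_image_iff:
  assumes "inj f" and "\<And>e. snd (f e) = snd e" and "\<And>S. indep V E (f ` S) \<longleftrightarrow> indep V G S"
  shows "circuit V E (f ` X) \<longleftrightarrow> circuit V G X"
proof -
  have "(\<forall>D. D \<subset> f ` X \<longrightarrow> indep V E D) \<longleftrightarrow> (\<forall>D. D \<subset> X \<longrightarrow> indep V G D)"
  proof
    assume "\<forall>D. D \<subset> f ` X \<longrightarrow> indep V E D"
    then show "\<forall>D. D \<subset> X \<longrightarrow> indep V G D"
      using assms(1,3) by (metis image_mono inj_image_eq_iff psubset_eq)
  next
    assume "\<forall>D. D \<subset> X \<longrightarrow> indep V G D"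
    then show "\<forall>D. D \<subset> f ` X \<longrightarrow> indep V E D"
      using assms(3) by (metis psubset_imp_subset psubset_eq subset_imageE)
  qed
  moreover have "f ` X \<subseteq> W V \<longleftrightarrow> X \<subseteq> W V" by (auto simp: subset_W_iff assms(2))
  ultimately show ?thesis unfolding circuit_def using assms(3) by simp
qed

lemma indep_subset:
  assumes "indep V E Y" and "X \<subseteq> Y" and "finite V"
  shows "indep V E X"
  unfolding indep_def
proof (intro conjI allI impI ballI)
  show "X \<subseteq> W V" using assms(1,2) by (auto simp: indep_def)
  have "finite Y" using assms(1,3) finite_subset finite_W by (auto simp: indep_def)
  fix c :: "'a elt \<Rightarrow> bit" and t
  assume zero: "\<forall>w\<in>V. (\<Sum>t\<in>X. c t * col E t w) = 0" and t: "t \<in> X"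
  define c' where "c' t = (if t \<in> X then c t else 0)" for t
  have "(\<Sum>t\<in>Y. c' t * col E t w) = (\<Sum>t\<in>X. c t * col E t w)" for w
    using sum.mono_neutral_right[OF \<open>finite Y\<close> assms(2), of "\<lambda>t. c' t * col E t w"]
    by (simp add: c'_def)
  then have "\<forall>t\<in>Y. c' t = 0" using zero assms(1) unfolding indep_def by metis
  then have "c' t = 0" using t assms(2) by blast
  then show "c t = 0" using t by (simp add: c'_def)
qed

lemma not_indepI:
  assumes "\<forall>w\<in>V. (\<Sum>t\<in>S. c t * col E t w) = 0" and "t \<in> S" and "c t \<noteq> 0"
  shows "\<not> indep V E S"
  using assms unfolding indep_def by blast

definition phi_circuit :: "'a set \<Rightarrow> ('a \<Rightarrow> 'a \<Rightarrow> bool) \<Rightarrow> 'a elt \<Rightarrow> 'a elt set" where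
  "phi_circuit V E e = insert e {(Phi, u) | u. u \<in> V \<and> col E e u = 1}"

lemma sum_col_subset_insert_Phis:
  assumes "fst e \<noteq> Phi" and "Y \<subseteq> insert e (Phis V)" and "finite V"
  shows "(\<Sum>t\<in>Y. c t * col E t w)
    = (if e \<in> Y then c e * col E e w else 0) + (if (Phi, w) \<in> Y then c (Phi, w) else 0)"
proof -
  have "finite Y" using assms(2,3) finite_subset by (auto simp: Phis_eq_image)
  have "(\<Sum>t\<in>Y - {e}. c t * col E t w) = (\<Sum>t\<in>Y - {e}. if (Phi, w) = t then c t else 0)"
    using assms(2) by (intro sum.cong) (auto simp: Phis_def)
  also have "\<dots> = (if (Phi, w) \<in> Y then c (Phi, w) else 0)"
    using assms(1) \<open>finite Y\<close> by (auto simp: sum.delta')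
  finally show ?thesis
    using sum.remove[OF \<open>finite Y\<close>, of e "\<lambda>t. c t * col E t w"] by (cases "e \<in> Y") auto
qed

lemma phi_circuit_subset_if_not_indep:
  assumes "fst e \<noteq> Phi" and "finite V"
    and "Y \<subseteq> insert e (Phis V)" and "Y \<subseteq> W V" and "\<not> indep V E Y"
  shows "phi_circuit V E e \<subseteq> Y"
proof -
  obtain c t0 where zero: "\<forall>w\<in>V. (\<Sum>t\<in>Y. c t * col E t w) = 0"
    and t0: "t0 \<in> Y" "c t0 \<noteq> 0"
    using assms(4,5) unfolding indep_def by blast
  have phi_coeff: "(if (Phi, w) \<in> Y then c (Phi, w) else 0) = (if e \<in> Y then c e * col E e w else 0)"
    if "w \<in> V" for w
    using zero that sum_col_subset_insert_Phis[OF assms(1,3,2), of c E w]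
    by (simp add: eq_neg_iff_add_eq_0[symmetric])
  have e: "e \<in> Y \<and> c e = 1"
  proof (rule ccontr)
    assume "\<not> (e \<in> Y \<and> c e = 1)"
    then obtain u where "t0 = (Phi, u)" "u \<in> V"
      using t0 assms(3,4) by (auto simp: Phis_def subset_W_iff)
    then show False using phi_coeff[of u] t0 \<open>\<not> (e \<in> Y \<and> c e = 1)\<close> by (auto split: if_splits)
  qed
  have "(Phi, u) \<in> Y" if "u \<in> V" "col E e u = 1" for u
    using phi_coeff[OF that(1)] that(2) e by (cases "(Phi, u) \<in> Y") auto
  then show ?thesis using e by (auto simp: phi_circuit_def)
qed

lemma not_indep_phi_circuit:
  assumes "fst e \<noteq> Phi" and "finite V"
  shows "\<not> indep V E (phi_circuit V E e)"
proof -
  have sub: "phi_circuit V E e \<subseteq> insert e (Phis V)" by (auto simp: phi_circuit_def Phis_def)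
  have "(\<Sum>t\<in>phi_circuit V E e. 1 * col E t w) = 0" if "w \<in> V" for w
  proof -
    have "(Phi, w) \<in> phi_circuit V E e \<longleftrightarrow> col E e w = 1"
      using assms(1) that by (auto simp: phi_circuit_def)
    moreover have "e \<in> phi_circuit V E e" by (simp add: phi_circuit_def)
    ultimately show ?thesis
      using sum_col_subset_insert_Phis[OF assms(1) sub assms(2), of "\<lambda>_. 1" E w]
      by (cases "col E e w") simp_all
  qed
  then show ?thesis
    by (intro not_indepI[where c = "\<lambda>_. 1" and t = e]) (simp_all add: phi_circuit_def)
qed

lemma indep_subset_insert_Phis_iff:
  assumes "fst e \<noteq> Phi" and "finite V" and "Y \<subseteq> insert e (Phis V)" and "Y \<subseteq> W V"
  shows "indep V E Y \<longleftrightarrow> \<not> phi_circuit V E e \<subseteq> Y"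
  using phi_circuit_subset_if_not_indep[OF assms] not_indep_phi_circuit[OF assms(1,2)]
    indep_subset[OF _ _ assms(2)] by blast

lemma circuit_subset_insert_Phis_iff:
  assumes "fst e \<noteq> Phi" and "snd e \<in> V" and "finite V"
  shows "circuit V E X \<and> X \<subseteq> insert e (Phis V) \<longleftrightarrow> X = phi_circuit V E e"
proof -
  have sub: "phi_circuit V E e \<subseteq> insert e (Phis V)" "phi_circuit V E e \<subseteq> W V"
    using assms(2) by (cases e; auto simp: phi_circuit_def Phis_def W_def)+
  have indep_iff: "indep V E D \<longleftrightarrow> \<not> phi_circuit V E e \<subseteq> D"
    if "D \<subseteq> insert e (Phis V)" "D \<subseteq> W V" for D
    using indep_subset_insert_Phis_iff[OF assms(1,3) that] .
  show ?thesis
  proof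
    assume X: "circuit V E X \<and> X \<subseteq> insert e (Phis V)"
    then have "phi_circuit V E e \<subseteq> X" using indep_iff by (auto simp: circuit_def)
    moreover have "\<not> phi_circuit V E e \<subset> X" using X sub indep_iff by (auto simp: circuit_def)
    ultimately show "X = phi_circuit V E e" by blast
  next
    assume "X = phi_circuit V E e"
    then show "circuit V E X \<and> X \<subseteq> insert e (Phis V)"
      using sub indep_iff unfolding circuit_def by (metis dual_order.trans psubsetE subset_refl)
  qed
qed

lemma fund_circuit_eq_vimage:
  assumes "looped_simple_graph V G" and f: "induced_iso V G E f" and "f ` B = Phis V"
    and "fst (f e) \<noteq> Phi" and "snd e \<in> V"
  shows "fund_circuit V G B e = f -` phi_circuit V E (f e)"
  unfolding fund_circuit_def
proof (rule the_equality)
  have "bij f" by (rule induced_iso_bij[OF f])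
  have fin: "finite V" using assms(1) by (simp add: looped_simple_graph_def)
  have "snd (f e) \<in> V" using assms(5) induced_iso_snd[OF f] by simp
  have charact: "circuit V G X \<and> X \<subseteq> insert e B \<longleftrightarrow> f ` X = phi_circuit V E (f e)" for X
  proof -
    have "circuit V G X \<longleftrightarrow> circuit V E (f ` X)"
      using circuit_image_iff[OF bij_is_inj[OF \<open>bij f\<close>] induced_iso_snd[OF f]
          induced_iso_indep_image[OF f assms(1)]] by simp
    moreover have "X \<subseteq> insert e B \<longleftrightarrow> f ` X \<subseteq> insert (f e) (Phis V)"
      using inj_image_subset_iff[OF bij_is_inj[OF \<open>bij f\<close>], of X "insert e B"] assms(3) by simp
    ultimately show ?thesis
      using circuit_subset_insert_Phis_iff[OF assms(4) \<open>snd (f e) \<in> V\<close> fin] by simp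
  qed
  show "circuit V G (f -` phi_circuit V E (f e)) \<and> f -` phi_circuit V E (f e) \<subseteq> insert e B"
    using charact \<open>bij f\<close> by (simp add: bij_is_surj surj_image_vimage_eq)
  show "X = f -` phi_circuit V E (f e)" if "circuit V G X \<and> X \<subseteq> insert e B" for X
    using charact that \<open>bij f\<close> by (metis bij_is_inj inj_vimage_image_eq)
qed

lemma mem_fund_circuit_iff_adjacent:
  assumes "looped_simple_graph V G" and f: "induced_iso V G E f" and fB: "f ` B = Phis V"
    and "b \<in> B" and "e \<in> W V" and "e \<notin> B" and "snd b \<noteq> snd e"
  shows "b \<in> fund_circuit V G B e \<longleftrightarrow> E (snd b) (snd e)"
proof -
  have snd_f: "\<And>x. snd (f x) = snd x" by (rule induced_iso_snd[OF f])
  have "inj f" using induced_iso_bij[OF f] bij_is_inj by blast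
  have "f b \<in> Phis V" using fB \<open>b \<in> B\<close> by blast
  then have fb: "f b = (Phi, snd b)" and "snd b \<in> V"
    using snd_f[of b] by (auto simp: Phis_def)
  have "snd e \<in> V" using \<open>e \<in> W V\<close> by (auto simp: W_def)
  obtain kd where fe: "f e = (kd, snd e)" using snd_f[of e] by (metis prod.collapse)
  have "f e \<notin> f ` B" using \<open>e \<notin> B\<close> \<open>inj f\<close> by (simp add: inj_image_mem_iff)
  then have "kd \<noteq> Phi" using fB fe \<open>snd e \<in> V\<close> by (auto simp: Phis_def)
  have "b \<in> fund_circuit V G B e \<longleftrightarrow> (Phi, snd b) \<in> phi_circuit V E (kd, snd e)"
    using fund_circuit_eq_vimage[OF assms(1) f fB] fe \<open>kd \<noteq> Phi\<close> \<open>snd e \<in> V\<close> fb by simp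
  also have "\<dots> \<longleftrightarrow> col E (kd, snd e) (snd b) = 1"
    using \<open>kd \<noteq> Phi\<close> \<open>snd b \<in> V\<close> by (simp add: phi_circuit_def)
  also have "\<dots> \<longleftrightarrow> E (snd b) (snd e)"
    using \<open>kd \<noteq> Phi\<close> assms(7) by (cases kd) simp_all
  finally show ?thesis .
qed

section \<open>Moving a basis transversal onto the phi-elements\<close>

definition transversal_of :: "'a set \<Rightarrow> ('a \<Rightarrow> kind) \<Rightarrow> 'a elt set" where
  "transversal_of V k = (\<lambda>v. (k v, v)) ` V"

lemma vtriple_eq: "vtriple v = {e. snd e = v}"
proof (intro set_eqI)
  show "e \<in> vtriple v \<longleftrightarrow> e \<in> {e. snd e = v}" for e
    by (cases e; cases "fst e") (auto simp: vtriple_def)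
qed

lemma transversal_Int_vtriple:
  assumes "transversal V T" and "v \<in> V"
  shows "T \<inter> vtriple v = {pick T v}"
proof -
  have "card (T \<inter> vtriple v) = 1" using assms unfolding transversal_def by blast
  then obtain x where x: "T \<inter> vtriple v = {x}" by (rule card_1_singletonE)
  then have "pick T v = x" unfolding pick_def by simp
  then show ?thesis using x by simp
qed

lemma pick_in_transversal:
  assumes "transversal V T" and "v \<in> V"
  shows "pick T v \<in> T" and "snd (pick T v) = v"
proof -
  have "pick T v \<in> T \<inter> vtriple v" using transversal_Int_vtriple[OF assms] by simp
  then show "pick T v \<in> T" and "snd (pick T v) = v" by (simp_all add: vtriple_eq)
qed

lemma transversal_eq_transversal_of:
  assumes "transversal V T"
  shows "T = transversal_of V (\<lambda>v. fst (pick T v))"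
  unfolding transversal_of_def
proof (intro equalityI subsetI)
  fix y assume "y \<in> T"
  then have "snd y \<in> V" using assms by (auto simp: transversal_def W_def)
  have "y \<in> T \<inter> vtriple (snd y)" using \<open>y \<in> T\<close> by (simp add: vtriple_eq)
  then have "y = pick T (snd y)" using transversal_Int_vtriple[OF assms \<open>snd y \<in> V\<close>] by simp
  then have "y = (fst (pick T (snd y)), snd y)" by (metis prod.collapse)
  then show "y \<in> (\<lambda>v. (fst (pick T v), v)) ` V" using \<open>snd y \<in> V\<close> by (rule image_eqI)
next
  fix y assume "y \<in> (\<lambda>v. (fst (pick T v), v)) ` V"
  then obtain u where "u \<in> V" and y: "y = (fst (pick T u), u)" by blast
  then show "y \<in> T" using pick_in_transversal[OF assms \<open>u \<in> V\<close>] by (metis prod.collapse)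
qed

lemma image_transversal_of:
  assumes "\<And>e. snd (m e) = snd e"
  shows "m ` transversal_of V k = transversal_of V (\<lambda>u. fst (m (k u, u)))"
proof -
  have "m (k u, u) = (fst (m (k u, u)), u)" for u
    using assms[of "(k u, u)"] by (cases "m (k u, u)") simp
  then show ?thesis unfolding transversal_of_def image_comp o_def by metis
qed

lemma map_ns_image_transversal_of:
  assumes "k w \<noteq> Phi"
  shows "map_ns w E ` transversal_of V k
    = transversal_of V (if col E (k w, w) w = 1 then k(w := Phi) else k)"
proof -
  have "(\<lambda>u. fst (map_ns w E (k u, u))) = (if col E (k w, w) w = 1 then k(w := Phi) else k)"
    using assms by (cases "k w"; cases "E w w") (auto simp: map_ns_def swap_at_def fun_eq_iff)
  then show ?thesis using image_transversal_of[of "map_ns w E" V k] by (simp add: map_ns_def)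
qed

lemma indep_transversal_of_neighbour:
  assumes "looped_simple_graph V E" and "indep V E (transversal_of V k)"
    and "v \<in> V" and "k v \<noteq> Phi" and "col E (k v, v) v = 0"
  obtains w where "w \<in> nbhd E v" and "k w \<noteq> Phi"
proof (rule ccontr)
  assume "\<not> thesis"
  then have Phi_nbhd: "\<forall>u\<in>nbhd E v. k u = Phi" using that by blast
  have sub: "phi_circuit V E (k v, v) \<subseteq> transversal_of V k"
  proof
    fix x assume "x \<in> phi_circuit V E (k v, v)"
    then consider "x = (k v, v)" | u where "x = (Phi, u)" "u \<in> V" "col E (k v, v) u = 1"
      unfolding phi_circuit_def by blast
    then show "x \<in> transversal_of V k"
    proof cases
      case 1 then show ?thesis using assms(3) by (simp add: transversal_of_def)
    next
      case (2 u)
      have "u \<noteq> v" using 2(3) assms(5) by auto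
      then have "E v u"
        using 2(3) assms(4) looped_simple_graph_sym[OF assms(1)] by (cases "k v") auto
      then have "k u = Phi" using Phi_nbhd \<open>u \<noteq> v\<close> by (simp add: nbhd_def)
      then show ?thesis using 2(1,2) by (auto simp: transversal_of_def intro!: image_eqI[where x = u])
    qed
  qed
  have "finite V" using assms(1) by (simp add: looped_simple_graph_def)
  then show False
    using indep_subset[OF assms(2) sub] not_indep_phi_circuit[of "(k v, v)" V E] assms(4) by simp
qed

text \<open>If the column of (k v, v) vanishes in row v, independence yields a neighbour w with
  k w \<noteq> Phi. Either loc_ns w clears w, or it fixes the transversal and complements the loop
  at v, after which loc_ns v clears v.\<close>

lemma induced_iso_replace_by_Phi:
  assumes "looped_simple_graph V E" and "indep V E (transversal_of V k)"
    and "v \<in> V" and "k v \<noteq> Phi"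
  obtains E' g u where "u \<in> V" and "k u \<noteq> Phi" and "induced_iso V E E' g"
    and "g ` transversal_of V k = transversal_of V (k(u := Phi))"
proof -
  note reduced = that
  have clear: thesis if "induced_iso V E E1 g1" and "g1 ` transversal_of V k = transversal_of V k"
    and "u \<in> V" and "k u \<noteq> Phi" and "col E1 (k u, u) u = 1" for E1 g1 u
  proof (rule reduced)
    show "induced_iso V E (loc_ns u E1) (map_ns u E1 \<circ> g1)"
      using induced_iso.step_ns[OF that(1,3)] .
    have "(map_ns u E1 \<circ> g1) ` transversal_of V k = map_ns u E1 ` g1 ` transversal_of V k"
      by (rule image_comp[symmetric])
    then show "(map_ns u E1 \<circ> g1) ` transversal_of V k = transversal_of V (k(u := Phi))"
      using that(2,4,5) map_ns_image_transversal_of[of k u E1 V] by simp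
  qed (fact that)+
  show thesis
  proof (cases "col E (k v, v) v = 1")
    case True
    then show thesis using clear[OF induced_iso.refl _ assms(3,4)] by simp
  next
    case False
    then have "col E (k v, v) v = 0" by (cases "col E (k v, v) v") simp_all
    then obtain w where w: "w \<in> nbhd E v" "k w \<noteq> Phi"
      using indep_transversal_of_neighbour[OF assms] by blast
    have "w \<in> V" using w(1) looped_simple_graph_dom[OF assms(1)] by (auto simp: nbhd_def)
    show thesis
    proof (cases "col E (k w, w) w = 1")
      case True
      then show thesis using clear[OF induced_iso.refl _ \<open>w \<in> V\<close> w(2)] by simp
    next
      case False
      have "v \<in> nbhd E w"
        using w(1) looped_simple_graph_sym[OF assms(1)] by (auto simp: nbhd_def)
      then have "loc_ns w E v v = (\<not> E v v)" by (simp add: loc_ns_def)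
      then have "col (loc_ns w E) (k v, v) v = 1"
        using \<open>col E (k v, v) v = 0\<close> assms(4) by (cases "k v"; cases "E v v") simp_all
      moreover have "map_ns w E ` transversal_of V k = transversal_of V k"
        using map_ns_image_transversal_of[of k w E V] w(2) False by simp
      ultimately show thesis
        using clear[OF induced_iso.step_ns[OF induced_iso.refl \<open>w \<in> V\<close>] _ assms(3,4)] by simp
    qed
  qed
qed

lemma induced_iso_onto_Phis:
  assumes "looped_simple_graph V E" and "indep V E (transversal_of V k)"
  obtains E' g where "induced_iso V E E' g" and "g ` transversal_of V k = Phis V"
  using assms
proof (induction "card {v \<in> V. k v \<noteq> Phi}" arbitrary: E k thesis rule: less_induct)
  case less
  show thesis
  proof (cases "\<exists>v\<in>V. k v \<noteq> Phi")
    case False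
    then have "transversal_of V k = Phis V" by (auto simp: transversal_of_def Phis_def)
    then show thesis using less.prems(1)[of E id] induced_iso.refl[of V E] by simp
  next
    case True
    then obtain v where "v \<in> V" "k v \<noteq> Phi" by blast
    then obtain E1 g u where u: "u \<in> V" "k u \<noteq> Phi" and g: "induced_iso V E E1 g"
      and img: "g ` transversal_of V k = transversal_of V (k(u := Phi))"
      by (rule induced_iso_replace_by_Phi[OF less.prems(2,3)]) blast
    have "finite V" using less.prems(2) by (simp add: looped_simple_graph_def)
    moreover have "{x \<in> V. (k(u := Phi)) x \<noteq> Phi} \<subset> {x \<in> V. k x \<noteq> Phi}" using u by auto
    ultimately have fewer: "card {x \<in> V. (k(u := Phi)) x \<noteq> Phi} < card {x \<in> V. k x \<noteq> Phi}"
      by (intro psubset_card_mono) simp_all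
    have lsg1: "looped_simple_graph V E1"
      by (rule induced_iso_looped_simple_graph[OF g less.prems(2)])
    have "indep V E1 (g ` transversal_of V k)"
      using induced_iso_indep_image[OF g less.prems(2)] less.prems(3) by simp
    then have indep1: "indep V E1 (transversal_of V (k(u := Phi)))" by (simp only: img)
    obtain E' h where h: "induced_iso V E1 E' h"
      and h_img: "h ` transversal_of V (k(u := Phi)) = Phis V"
      using less.hyps[OF fewer _ lsg1 indep1] by blast
    have "(h \<circ> g) ` transversal_of V k = Phis V" using img h_img by (simp only: image_comp[symmetric])
    then show thesis by (rule less.prems(1)[OF induced_iso_trans[OF h g]])
  qed
qed

lemma induced_iso_transversal_onto_Phis:
  assumes "looped_simple_graph V G" and "transversal V B" and "indep V G B"
  obtains E f where "induced_iso V G E f" and "f ` B = Phis V"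
proof -
  note B_eq = transversal_eq_transversal_of[OF assms(2)]
  then have "indep V G (transversal_of V (\<lambda>v. fst (pick B v)))" using assms(3) by simp
  then obtain E f where f: "induced_iso V G E f"
    and "f ` transversal_of V (\<lambda>v. fst (pick B v)) = Phis V"
    by (rule induced_iso_onto_Phis[OF assms(1)])
  then have "f ` B = Phis V" using B_eq by simp
  then show thesis by (rule that[OF f])
qed

lemma pick_mem_fund_circuit_iff_adjacent:
  assumes "looped_simple_graph V G" and f: "induced_iso V G E f" and fB: "f ` B = Phis V"
    and "transversal V B" and "transversal V C" and "B \<inter> C = {}"
    and "v \<in> V" and "w \<in> V" and "v \<noteq> w"
  shows "pick B w \<in> fund_circuit V G B (pick C v) \<longleftrightarrow> E w v"
proof -
  have "pick C v \<in> W V" "pick C v \<notin> B"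
    using pick_in_transversal(1)[OF assms(5,7)] assms(5,6) by (auto simp: transversal_def)
  then show ?thesis
    using mem_fund_circuit_iff_adjacent[OF assms(1) f fB] pick_in_transversal[OF assms(4,8)]
      pick_in_transversal(2)[OF assms(5,7)] assms(9) by simp
qed

definition toggle_loops :: "'a set \<Rightarrow> ('a \<Rightarrow> 'a \<Rightarrow> bool) \<Rightarrow> ('a \<Rightarrow> 'a \<Rightarrow> bool)" where
  "toggle_loops L E = (\<lambda>x y. if x = y \<and> x \<in> L then \<not> E x y else E x y)"

lemma induced_iso_toggle_loops:
  assumes "finite L" and "L \<subseteq> V"
  obtains g where "induced_iso V E (toggle_loops L E) g" and "\<And>u. g (Phi, u) = (Phi, u)"
  using assms
proof (induction L arbitrary: thesis rule: finite_induct)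
  case empty
  have "toggle_loops {} E = E" by (simp add: toggle_loops_def)
  then show ?case using empty.prems(1)[of id] induced_iso.refl[of V E] by (metis id_apply)
next
  case (insert x L)
  obtain g where g: "induced_iso V E (toggle_loops L E) g" and "\<And>u. g (Phi, u) = (Phi, u)"
    using insert.IH insert.prems(2) by blast
  have "loc_l x (toggle_loops L E) = toggle_loops (insert x L) E"
    using insert.hyps(2) by (auto simp: toggle_loops_def loc_l_def fun_eq_iff)
  moreover have "(map_l x (toggle_loops L E) \<circ> g) (Phi, u) = (Phi, u)" for u
    using \<open>\<And>u. g (Phi, u) = (Phi, u)\<close> by (simp add: map_l_def swap_at_def)
  moreover have "induced_iso V E (loc_l x (toggle_loops L E)) (map_l x (toggle_loops L E) \<circ> g)"
    using induced_iso.step_l[OF g] insert.prems(2) by simp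
  ultimately show ?case using insert.prems(1) by metis
qed

lemma toggle_loops_eqI:
  assumes "looped_simple_graph V E" and "looped_simple_graph V H"
    and "\<And>v w. v \<in> V \<Longrightarrow> w \<in> V \<Longrightarrow> v \<noteq> w \<Longrightarrow> H v w \<longleftrightarrow> E v w"
  shows "toggle_loops {v \<in> V. H v v \<noteq> E v v} E = H"
proof (intro ext)
  fix x y
  show "toggle_loops {v \<in> V. H v v \<noteq> E v v} E x y = H x y"
    using assms(3)[of x y] looped_simple_graph_dom[OF assms(1), of x y]
      looped_simple_graph_dom[OF assms(2), of x y]
    by (cases "x = y") (auto simp: toggle_loops_def)
qed

lemma induced_iso_fixing_Phis_if_same_adjacency:
  assumes "looped_simple_graph V E" and "looped_simple_graph V H"
    and "\<And>v w. v \<in> V \<Longrightarrow> w \<in> V \<Longrightarrow> v \<noteq> w \<Longrightarrow> H v w \<longleftrightarrow> E v w"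
  obtains g where "induced_iso V E H g" and "g ` Phis V = Phis V"
proof -
  have "finite {v \<in> V. H v v \<noteq> E v v}"
    using assms(1) by (simp add: looped_simple_graph_def)
  then obtain g where "induced_iso V E (toggle_loops {v \<in> V. H v v \<noteq> E v v} E) g"
    and "\<And>u. g (Phi, u) = (Phi, u)"
    by (rule induced_iso_toggle_loops) auto
  moreover from \<open>\<And>u. g (Phi, u) = (Phi, u)\<close> have "g ` Phis V = Phis V"
    by (simp add: Phis_eq_image image_comp o_def)
  ultimately show thesis using that toggle_loops_eqI[OF assms] by simp
qed

theorem corollary4p2:
  fixes V :: "'a set" and G H :: "'a \<Rightarrow> 'a \<Rightarrow> bool" and B C :: "'a elt set"
  assumes "looped_simple_graph V G"
    and "transversal V B" and "is_basis V G B"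
    and "transversal V C" and "B \<inter> C = {}"
    and "looped_simple_graph V H"
    and "\<And>v w. v \<in> V \<Longrightarrow> w \<in> V \<Longrightarrow> v \<noteq> w \<Longrightarrow>
           H v w \<longleftrightarrow> pick B w \<in> fund_circuit V G B (pick C v)"
  shows "(\<forall>v\<in>V. \<forall>w\<in>V. v \<noteq> w \<longrightarrow>
            (pick B w \<in> fund_circuit V G B (pick C v) \<longleftrightarrow>
             pick B v \<in> fund_circuit V G B (pick C w)))
         \<and> locally_equivalent V G H
         \<and> (\<exists>\<beta>. induced_iso V G H \<beta> \<and> \<beta> ` B = Phis V)"
proof -
  obtain E f where f: "induced_iso V G E f" and fB: "f ` B = Phis V"
    using induced_iso_transversal_onto_Phis[OF assms(1,2)] assms(3) by (auto simp: is_basis_def)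
  have lsgE: "looped_simple_graph V E" by (rule induced_iso_looped_simple_graph[OF f assms(1)])
  note adjacent = pick_mem_fund_circuit_iff_adjacent[OF assms(1) f fB assms(2,4,5)]
  have "H v w \<longleftrightarrow> E v w" if "v \<in> V" "w \<in> V" "v \<noteq> w" for v w
    using assms(7)[OF that] adjacent[OF that] looped_simple_graph_sym[OF lsgE, of v w] by simp
  then obtain g where g: "induced_iso V E H g" and "g ` Phis V = Phis V"
    by (rule induced_iso_fixing_Phis_if_same_adjacency[OF lsgE assms(6)])
  then have "(g \<circ> f) ` B = Phis V" using fB by (simp only: image_comp[symmetric])
  moreover have iso: "induced_iso V G H (g \<circ> f)" by (rule induced_iso_trans[OF g f])
  moreover have "locally_equivalent V G H" by (rule induced_iso_locally_equivalent[OF iso])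
  moreover have "pick B w \<in> fund_circuit V G B (pick C v) \<longleftrightarrow> pick B v \<in> fund_circuit V G B (pick C w)"
    if "v \<in> V" "w \<in> V" "v \<noteq> w" for v w
    using adjacent[OF that] adjacent[OF that(2,1)] that(3) looped_simple_graph_sym[OF lsgE, of v w]
    by simp
  ultimately show ?thesis by blast
qed

end
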